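(* (Perfect completeness of the Meadows protocol.) Let a Meadows puzzle on an $n\times n$ grid be given. If the prover $P$ knows a solution of the puzzle and follows the Meadows zero-knowledge protocol described in the context, then the verifier $V$ always accepts.
   Context: Meadows puzzle: an $n\times n$ grid in which some cells $c_1,\dots,c_k$ contain a dot. A solution is a partition of the grid into squares (axis-aligned $s\times s$ blocks of cells) such that each square contains exactly one dotted cell. Cards: each card has either an integer or nothing (a blank card) on its front; all backs are indistinguishable. A pile-shifting shuffle applied to a matrix of face-down cards (entries may be equal-size stacks per row) cyclically shifts its columns by a uniformly random amount unknown to everyone. Chosen cut protocol: given face-down cards (or equal-size stacks) $c'_1,\dots,c'_q$ and a secret index $i$ chosen by $P$, $P$ forms a $3\times q$ matrix with row 1 equal to $c'_1,\dots,c'_q$, row 2 a face-down card $1$ in column $i$ and $0$ elsewhere, row 3 a card $1$ in column 1 and $0$ elsewhere (turned face-down); a pile-shifting shuffle is applied; row 2 is revealed and the card of row 1 above the $1$ is $c'_i$; after use it is put back, face-up cards are turned down, another pile-shifting shuffle is applied, row 3 is revealed and the columns are shifted cyclically so its $1$ returns to column 1. Printing protocol: given a face-down $p\times q$ template and a $p\times q$ area, each template card is placed on the corresponding area card; for each two-card stack, $P$ uses the chosen cut protocol to select a card, it is revealed, $V$ rejects unless it is blank, and it is removed. Meadows protocol: $P$ publicly puts a blank card on every cell, appends $n-1$ rows and $n-1$ columns of blank dummy cards below and to the right, and turns all cards face-down, giving a $(2n-1)\times(2n-1)$ matrix (read row by row as a sequence). $P$ builds $n$ templates, one for each $s=1,\dots,n$: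 an $n\times n$ matrix whose top-left $s\times s$ block consists of cards $1$ and whose other cards are blank; $V$ checks them. Let $B_1,\dots,B_k$ be the squares of $P$'s solution with $c_i\in B_i$. For $i=1,\dots,k$: (1) via the chosen cut protocol $P$ selects the top-left card of the $n\times n$ area whose top-left corner is that of $B_i$; (2) via the chosen cut protocol $P$ selects the template of $B_i$'s size; (3) the printing protocol is applied; (4) all cards on dotted cells are revealed and $V$ rejects unless those on $c_1,\dots,c_i$ are $1$ and those on $c_{i+1},\dots,c_k$ are blank (they are then turned face-down again); (5) $P$ reconstructs the used template, returns it to the pile, and $V$ checks all $n$ templates (rejecting otherwise). Finally $P$ reveals all grid cards and $V$ rejects unless all are $1$; $P$ reveals all dummy cards and $V$ rejects unless all are blank. Otherwise $V$ accepts. *)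

theory Defs
  imports Main
begin

datatype card = Blank | Num int

text \<open>Cells are pairs (row, column), 0-indexed; the grid is {0..<n} x {0..<n}.
  A square (r, c, s) is the s x s block with top-left cell (r, c).\<close>

definition grid :: "nat \<Rightarrow> (nat \<times> nat) set" where
  "grid n = {0..<n} \<times> {0..<n}"

fun cells :: "nat \<times> nat \<times> nat \<Rightarrow> (nat \<times> nat) set" where
  "cells (r, c, s) = {r..<r+s} \<times> {c..<c+s}"

definition meadows_puzzle :: "nat \<Rightarrow> (nat \<times> nat) list \<Rightarrow> bool" where
  "meadows_puzzle n dots \<longleftrightarrow> distinct dots \<and> set dots \<subseteq> grid n"

definition is_meadows_solution ::
  "nat \<Rightarrow> (nat \<times> nat) list \<Rightarrow> (nat \<times> nat \<times> nat) set \<Rightarrow> bool" where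
  "is_meadows_solution n dots S \<longleftrightarrow>
     (\<forall>B\<in>S. 1 \<le> snd (snd B) \<and> cells B \<subseteq> grid n) \<and>
     (\<forall>B\<in>S. \<forall>B'\<in>S. B \<noteq> B' \<longrightarrow> cells B \<inter> cells B' = {}) \<and>
     \<Union> (cells ` S) = grid n \<and>
     (\<forall>B\<in>S. card (set dots \<inter> cells B) = 1)"

text \<open>A pile-shifting shuffle cyclically shifts the columns by an amount r
  (rotate r on the list of columns). The chosen cut protocol on row-1 entries xs
  with secret index i (0-indexed), using shuffle amounts r1 and r2.
  The argument use gets the (shifted) row 1 and the column p of the selected entry
  (the entry above the revealed card 1 of row 2); it returns the modified row 1
  together with some extra result, or None if V rejected during the use.
  Afterwards the cards are put back, a second shuffle r2 is applied, row 3 is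
  revealed and the columns are shifted so that its 1 returns to column 1.\<close>

definition chosen_cut ::
  "nat \<Rightarrow> nat \<Rightarrow> 'a list \<Rightarrow> nat \<Rightarrow> ('a list \<Rightarrow> nat \<Rightarrow> ('a list \<times> 'b) option)
     \<Rightarrow> ('a list \<times> 'b) option" where
  "chosen_cut r1 r2 xs i use =
     (let q = length xs;
          row2 = map (\<lambda>j. if j = i then Num 1 else Num 0) [0..<q];
          row3 = map (\<lambda>j. if j = 0 then Num 1 else Num 0) [0..<q];
          M1 = rotate r1 (zip xs (zip row2 row3));
          p = (LEAST j. j < q \<and> fst (snd (M1 ! j)) = Num 1)
      in case use (map fst M1) p of
           None \<Rightarrow> None
         | Some (ys, b) \<Rightarrow>
             (let M2 = rotate r2 (zip ys (map snd M1));
                  p3 = (LEAST j. j < q \<and> snd (snd (M2 ! j)) = Num 1)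
              in Some (map fst (rotate p3 M2), b)))"

text \<open>Printing one two-card stack (template card t on area card a), with shuffle
  amounts (r1, r2). The honest prover selects a blank card (the template card if it
  is blank, else the area card). The selected card is revealed, V rejects unless it
  is blank, and it is removed (None = no card in that position).\<close>

definition print_stack :: "nat \<times> nat \<Rightarrow> card \<Rightarrow> card \<Rightarrow> card option" where
  "print_stack rr t a =
     (case chosen_cut (fst rr) (snd rr) [Some t, Some a] (if t = Blank then 0 else 1)
             (\<lambda>ys p. case ys ! p of
                        Some c \<Rightarrow> if c = Blank then Some (ys[p := None], ()) else None
                      | None \<Rightarrow> None) of
        None \<Rightarrow> None
      | Some (ys, _) \<Rightarrow> (case filter (\<lambda>x. x \<noteq> None) ys of [Some c] \<Rightarrow> Some c | _ \<Rightarrow> None))"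

text \<open>Printing protocol: template tpl (n x n, row-major list) onto the n x n area of the
  (shifted) sequence area (rows of width w) whose top-left card is at position p.
  R gives the shuffle amounts for the stack at template position (a, b).\<close>

fun print_seq ::
  "(nat \<times> nat \<Rightarrow> nat \<times> nat) \<Rightarrow> nat \<Rightarrow> nat \<Rightarrow> card list \<Rightarrow> nat \<Rightarrow> (nat \<times> nat) list
     \<Rightarrow> card list \<Rightarrow> card list option" where
  "print_seq R n w tpl p [] area = Some area"
| "print_seq R n w tpl p ((a, b) # L) area =
     (let pos = (p + a * w + b) mod length area in
      case print_stack (R (a, b)) (tpl ! (a * n + b)) (area ! pos) of
        None \<Rightarrow> None
      | Some c \<Rightarrow> print_seq R n w tpl p L (area[pos := c]))"

definition template :: "nat \<Rightarrow> nat \<Rightarrow> card list" where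
  "template n s = concat (map (\<lambda>a. map (\<lambda>b. if a < s \<and> b < s then Num 1 else Blank) [0..<n]) [0..<n])"

definition templates :: "nat \<Rightarrow> card list list" where
  "templates n = map (template n) [1..<n+1]"

text \<open>The (2n-1) x (2n-1) matrix is stored row by row; cell (x, y) is at x*(2n-1)+y.
  The randomness sigma assigns to every pile-shifting shuffle (identified by a label)
  its shift amount:  [i,0,j] area cut of step i, [i,1,j] template cut of step i,
  [i,2,a,b,j] printing of stack (a,b) in step i  (j = 0 first, j = 1 second shuffle).
  The state is (matrix, template pile).\<close>

definition meadows_step ::
  "(nat list \<Rightarrow> nat) \<Rightarrow> nat \<Rightarrow> (nat \<times> nat) list \<Rightarrow> nat \<Rightarrow> nat \<times> nat \<times> nat
     \<Rightarrow> card list \<times> card list list \<Rightarrow> (card list \<times> card list list) option" where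
  "meadows_step \<sigma> n dots i B st =
     (let w = 2 * n - 1; r = fst B; c = fst (snd B); s = snd (snd B);
          L = concat (map (\<lambda>a. map (\<lambda>b. (a, b)) [0..<n]) [0..<n])
      in case chosen_cut (\<sigma> [i,0,0]) (\<sigma> [i,0,1]) (fst st) (r * w + c)
                (\<lambda>A p. case chosen_cut (\<sigma> [i,1,0]) (\<sigma> [i,1,1]) (snd st) (s - 1)
                    (\<lambda>T pt. case print_seq (\<lambda>(a, b). (\<sigma> [i,2,a,b,0], \<sigma> [i,2,a,b,1]))
                                         n w (T ! pt) p L A of
                             None \<Rightarrow> None
                           | Some A' \<Rightarrow> Some (T[pt := template n s], A')) of
                   None \<Rightarrow> None
                 | Some (T', A') \<Rightarrow> Some (A', T')) of
           None \<Rightarrow> None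
         | Some (A', T') \<Rightarrow>
             (if (\<forall>j<length dots. A' ! (fst (dots ! j) * w + snd (dots ! j))
                                   = (if j \<le> i then Num 1 else Blank))
                 \<and> T' = templates n
              then Some (A', T') else None))"

fun meadows_steps ::
  "(nat list \<Rightarrow> nat) \<Rightarrow> nat \<Rightarrow> (nat \<times> nat) list \<Rightarrow> (nat \<times> nat \<times> nat) list \<Rightarrow> nat
     \<Rightarrow> card list \<times> card list list \<Rightarrow> (card list \<times> card list list) option" where
  "meadows_steps \<sigma> n dots [] i st = Some st"
| "meadows_steps \<sigma> n dots (B # Bs) i st =
     (case meadows_step \<sigma> n dots i B st of
        None \<Rightarrow> None
      | Some st' \<Rightarrow> meadows_steps \<sigma> n dots Bs (Suc i) st')"

text \<open>V accepts the run with shuffle outcomes sigma when the prover follows the protocol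
  with the solution squares Bs = [B_1,...,B_k] (c_i in B_i).\<close>
definition meadows_accepts ::
  "(nat list \<Rightarrow> nat) \<Rightarrow> nat \<Rightarrow> (nat \<times> nat) list \<Rightarrow> (nat \<times> nat \<times> nat) list \<Rightarrow> bool" where
  "meadows_accepts \<sigma> n dots Bs =
     (let w = 2 * n - 1 in
      templates n = map (template n) [1..<n+1] \<and>
      (case meadows_steps \<sigma> n dots Bs 0 (replicate (w * w) Blank, templates n) of
         None \<Rightarrow> False
       | Some (A, T) \<Rightarrow>
           (\<forall>x<w. \<forall>y<w. A ! (x * w + y) = (if x < n \<and> y < n then Num 1 else Blank))))"

end

theory Submission
  imports Defs
begin

text \<open>The honest prover maintains the invariant that after step i the matrix carries cards 1
  exactly on the cells of B_1, ..., B_i and blank cards elsewhere, while the template pile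
  is unchanged.  A chosen cut is undone by its final realignment, so all it does is let the
  prover act on the card he selected.  Printing the template of B_{i+1} at the corner of
  B_{i+1} stacks each of its cards 1 on a blank card, since the squares are disjoint;
  so every revealed card is blank.  As each dot lies in its own square only, the covered dots
  are then exactly c_1, ..., c_{i+1}, and after the last step the squares cover the grid.\<close>

lemma mult_add_less_mult:
  fixes a b m n :: nat
  assumes "a < m" "b < n"
  shows "a * n + b < m * n"
proof -
  have "a * n + b < Suc a * n" using assms(2) by simp
  also have "\<dots> \<le> m * n" using assms(1) by (intro mult_le_mono1) simp
  finally show ?thesis .
qed

lemma ex_add_mod_eq:
  fixes i q r :: nat
  assumes "i < q"
  shows "\<exists>j<q. (r + j) mod q = i"
proof
  let ?j = "(q - r mod q + i) mod q"
  have "(r + ?j) mod q = (r mod q + (q - r mod q) + i) mod q"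
    by (simp add: mod_simps add.assoc)
  also have "r mod q + (q - r mod q) = q" using assms by simp
  finally show "?j < q \<and> (r + ?j) mod q = i" using assms by simp
qed

lemma add_mod_inj:
  fixes j m q r :: nat
  assumes "j < q" "m < q" "(r + j) mod q = (r + m) mod q"
  shows "j = m"
proof -
  have "j mod q = m mod q" using assms(3) by (simp add: nat_mod_eq_iff)
  then show ?thesis using assms by simp
qed

lemma Least_add_mod_eq:
  fixes i q r :: nat
  assumes "i < q"
  shows "(LEAST j. j < q \<and> (r + j) mod q = i) < q"
    and "(r + (LEAST j. j < q \<and> (r + j) mod q = i)) mod q = i"
  using LeastI_ex[OF ex_add_mod_eq[OF assms]] by simp_all

lemma rotate_list_update:
  assumes "j < length xs" "(r + j) mod length xs = i"
  shows "(rotate r xs)[j := v] = rotate r (xs[i := v])"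
proof (rule nth_equalityI)
  have "0 < length xs" using le_less_trans[OF le0 assms(1)] .
  then have i: "i < length xs" using assms(2) by auto
  fix m assume m: "m < length ((rotate r xs)[j := v])"
  then have "(r + m) mod length xs = i \<longleftrightarrow> m = j"
    using add_mod_inj[of m "length xs" j r] assms by auto
  with i m show "(rotate r xs)[j := v] ! m = rotate r (xs[i := v]) ! m"
    by (auto simp: nth_rotate nth_list_update)
qed simp

lemma zip_rotate:
  assumes "length xs = length ys"
  shows "zip (rotate r xs) (rotate r ys) = rotate r (zip xs ys)"
proof (rule nth_equalityI)
  fix m assume m: "m < length (zip (rotate r xs) (rotate r ys))"
  then have "0 < length ys" by (cases ys) auto
  then have "(r + m) mod length ys < length ys" by simp
  with m assms show "zip (rotate r xs) (rotate r ys) ! m = rotate r (zip xs ys) ! m"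
    by (simp add: nth_rotate)
qed (use assms in simp)

text \<open>Row 3 remembers where column 1 was, so realigning it after the second shuffle undoes
  both shuffles.\<close>

lemma chosen_cut_eq_Some:
  assumes i: "i < length xs" and len: "length zs = length xs"
    and use: "\<And>j. j < length xs \<Longrightarrow> (r1 + j) mod length xs = i
                \<Longrightarrow> use (rotate r1 xs) j = Some (rotate r1 zs, b)"
  shows "chosen_cut r1 r2 xs i use = Some (zs, b)"
proof -
  define q where "q = length xs"
  define row2 where "row2 = map (\<lambda>j. if j = i then Num 1 else Num 0) [0..<q]"
  define row3 where "row3 = map (\<lambda>j. if j = 0 then Num 1 else Num 0) [0..<q]"
  define M1 where "M1 = rotate r1 (zip xs (zip row2 row3))"
  define M2 where "M2 = rotate r2 (zip (rotate r1 zs) (map snd M1))"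
  have q: "0 < q" using i q_def by linarith
  have "(\<lambda>j. j < q \<and> fst (snd (M1 ! j)) = Num 1) = (\<lambda>j. j < q \<and> (r1 + j) mod q = i)"
    using q by (intro ext) (auto simp: M1_def row2_def row3_def q_def nth_rotate split: if_splits)
  then obtain p where p: "p = (LEAST j. j < q \<and> fst (snd (M1 ! j)) = Num 1)"
    and "p < q" "(r1 + p) mod q = i"
    using Least_add_mod_eq[of i q r1] i q_def by simp
  then have use_p: "use (map fst M1) p = Some (rotate r1 zs, b)"
    using use by (simp add: M1_def row2_def row3_def q_def rotate_map[symmetric])
  have M2: "M2 = rotate (r2 + r1) (zip zs (zip row2 row3))"
    using len by (simp add: M2_def M1_def row2_def row3_def q_def rotate_map[symmetric]
        zip_rotate rotate_rotate)
  have "(\<lambda>j. j < q \<and> snd (snd (M2 ! j)) = Num 1) = (\<lambda>j. j < q \<and> (r2 + r1 + j) mod q = 0)"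
    using q len by (intro ext) (auto simp: M2 row2_def row3_def q_def nth_rotate split: if_splits)
  then obtain p3 where p3: "p3 = (LEAST j. j < q \<and> snd (snd (M2 ! j)) = Num 1)"
    and "(r2 + r1 + p3) mod q = 0"
    using Least_add_mod_eq[of 0 q "r2 + r1"] q by simp
  then have "rotate p3 M2 = zip zs (zip row2 row3)"
    using len by (simp add: M2 rotate_rotate row2_def row3_def q_def ac_simps)
  then have "map fst (rotate p3 M2) = zs"
    using len by (simp add: row2_def row3_def q_def)
  then show ?thesis
    using use_p p p3 unfolding chosen_cut_def Let_def
    by (simp add: q_def[symmetric] row2_def[symmetric] row3_def[symmetric]
        M1_def[symmetric] M2_def[symmetric])
qed

lemma chosen_cut_put_back:
  assumes i: "i < length xs" and "xs ! i = x" "f x = Some b"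
  shows "chosen_cut r1 r2 xs i
           (\<lambda>ys p. case f (ys ! p) of None \<Rightarrow> None | Some c \<Rightarrow> Some (ys[p := x], c))
         = Some (xs, b)"
proof (rule chosen_cut_eq_Some[OF i refl])
  fix j assume j: "j < length xs" "(r1 + j) mod length xs = i"
  then have "rotate r1 xs ! j = x" using assms(2) by (simp add: nth_rotate)
  moreover have "(rotate r1 xs)[j := x] = rotate r1 xs"
    using rotate_list_update[OF j, of x] assms(2) by (metis list_update_id)
  ultimately show "(case f (rotate r1 xs ! j) of None \<Rightarrow> None
                     | Some c \<Rightarrow> Some ((rotate r1 xs)[j := x], c)) = Some (rotate r1 xs, b)"
    using assms(3) by simp
qed

lemma print_stack_blank:
  assumes "t = Blank \<or> a = Blank"
  shows "print_stack rr t a = Some (if t = Blank then a else t)"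
proof -
  define i :: nat where "i = (if t = Blank then 0 else 1)"
  define zs where "zs = [Some t, Some a][i := None]"
  have "chosen_cut (fst rr) (snd rr) [Some t, Some a] i
          (\<lambda>ys p. case ys ! p of
                    Some c \<Rightarrow> if c = Blank then Some (ys[p := None], ()) else None
                  | None \<Rightarrow> None) = Some (zs, ())"
  proof (rule chosen_cut_eq_Some)
    fix j assume j: "j < length [Some t, Some a]" "(fst rr + j) mod length [Some t, Some a] = i"
    have "rotate (fst rr) [Some t, Some a] ! j = Some Blank"
      using j assms by (auto simp: nth_rotate i_def)
    moreover have "(rotate (fst rr) [Some t, Some a])[j := None] = rotate (fst rr) zs"
      using rotate_list_update[OF j] zs_def by simp
    ultimately show "(case rotate (fst rr) [Some t, Some a] ! j of
                        Some c \<Rightarrow> if c = Blank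
                          then Some ((rotate (fst rr) [Some t, Some a])[j := None], ()) else None
                      | None \<Rightarrow> None) = Some (rotate (fst rr) zs, ())"
      by simp
  qed (auto simp: i_def zs_def)
  then show ?thesis
    unfolding print_stack_def by (auto simp: i_def zs_def)
qed

lemma print_seq_rotate:
  assumes "0 < length xs" "(r + p) mod length xs = i"
  shows "print_seq R n w tpl p L (rotate r xs)
           = map_option (rotate r) (print_seq R n w tpl i L xs)"
  using assms
proof (induction L arbitrary: xs)
  case (Cons ab L)
  obtain a b where ab: "ab = (a, b)" by (cases ab)
  define j where "j = (p + a * w + b) mod length xs"
  define k where "k = (i + a * w + b) mod length xs"
  have "(r + j) mod length xs = ((r + p) mod length xs + (a * w + b)) mod length xs"
    by (simp add: j_def mod_simps add.assoc)
  then have j: "j < length xs" "(r + j) mod length xs = k"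
    using Cons.prems by (simp_all add: j_def k_def add.assoc)
  then have "rotate r xs ! j = xs ! k" by (simp add: nth_rotate)
  moreover have "(rotate r xs)[j := c] = rotate r (xs[k := c])" for c
    using rotate_list_update[OF j] .
  moreover have "print_seq R n w tpl p L (rotate r (xs[k := c]))
      = map_option (rotate r) (print_seq R n w tpl i L (xs[k := c]))" for c
    using Cons.IH[of "xs[k := c]"] Cons.prems by simp
  ultimately show ?case
    by (simp add: ab Let_def j_def[symmetric] k_def[symmetric] split: option.split)
qed simp

definition board :: "nat \<Rightarrow> (nat \<times> nat) set \<Rightarrow> card list" where
  "board w U = map (\<lambda>x. if x \<in> U then Num 1 else Blank) (List.product [0..<w] [0..<w])"

lemma length_board [simp]: "length (board w U) = w * w"
  by (simp add: board_def)

lemma nth_board: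
  assumes "k < w * w"
  shows "board w U ! k = (if (k div w, k mod w) \<in> U then Num 1 else Blank)"
proof -
  have "k div w < w" "k mod w < w"
    using assms less_mult_imp_div_less[of k w w] by (auto intro: mod_less_divisor)
  then show ?thesis using assms by (simp add: board_def product_nth)
qed

lemma board_nth:
  assumes "x < w" "y < w"
  shows "board w U ! (x * w + y) = (if (x, y) \<in> U then Num 1 else Blank)"
  using assms mult_add_less_mult[OF assms] by (simp add: nth_board)

lemma board_update:
  assumes "x < w" "y < w"
  shows "(board w U)[x * w + y := Num 1] = board w (insert (x, y) U)"
proof (rule nth_equalityI)
  fix k assume "k < length ((board w U)[x * w + y := Num 1])"
  then have k: "k < w * w" by simp
  have "x * w + y = k \<longleftrightarrow> (k div w, k mod w) = (x, y)"
  proof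
    assume "(k div w, k mod w) = (x, y)"
    then show "x * w + y = k" by (metis div_mult_mod_eq prod.inject)
  qed (use assms in auto)
  then show "(board w U)[x * w + y := Num 1] ! k = board w (insert (x, y) U) ! k"
    using k mult_add_less_mult[OF assms] by (auto simp: nth_board nth_list_update)
qed simp

lemma template_eq_board: "template n s = board n ({0..<s} \<times> {0..<s})"
  by (simp add: template_def board_def product_concat_map map_concat comp_def)

text \<open>Template card (a, b) lands on cell (r + a, c + b): thanks to the n - 1 dummy rows and
  columns the printed area never wraps around the matrix.\<close>

lemma print_seq_template:
  assumes w: "w = 2 * n - 1" and "r < n" "c < n"
    and "distinct L" "set L \<subseteq> {0..<n} \<times> {0..<n}"
    and "V \<inter> (\<lambda>(a, b). (r + a, c + b)) ` (set L \<inter> {0..<s} \<times> {0..<s}) = {}"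
  shows "print_seq R n w (template n s) (r * w + c) L (board w V)
           = Some (board w (V \<union> (\<lambda>(a, b). (r + a, c + b)) ` (set L \<inter> {0..<s} \<times> {0..<s})))"
  using assms(4-6)
proof (induction L arbitrary: V)
  case (Cons ab L)
  obtain a b where ab: "ab = (a, b)" by (cases ab)
  have "a < n" "b < n" using Cons.prems(2) ab by auto
  then have lt: "r + a < w" "c + b < w" using assms(1-3) by auto
  then have pos: "(r * w + c + a * w + b) mod (w * w) = (r + a) * w + (c + b)"
    using mult_add_less_mult[OF lt] by (simp add: algebra_simps)
  have tpl: "template n s ! (a * n + b) = (if a < s \<and> b < s then Num 1 else Blank)"
    using \<open>a < n\<close> \<open>b < n\<close> by (simp add: template_eq_board board_nth)
  let ?stamp = "\<lambda>A. (\<lambda>(a, b). (r + a, c + b)) ` (A \<inter> {0..<s} \<times> {0..<s})"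
  have "(r + a, c + b) \<notin> ?stamp (set L)" using Cons.prems(1) ab by auto
  moreover have "V \<inter> ?stamp (set L) = {}" using Cons.prems(3) ab by auto
  ultimately have disj: "insert (r + a, c + b) V \<inter> ?stamp (set L) = {}" by blast
  have IH: "print_seq R n w (template n s) (r * w + c) L (board w V')
     = Some (board w (V' \<union> ?stamp (set L)))"
    if "V' \<subseteq> insert (r + a, c + b) V" for V'
  proof (rule Cons.IH)
    show "distinct L" "set L \<subseteq> {0..<n} \<times> {0..<n}" using Cons.prems by auto
    show "V' \<inter> ?stamp (set L) = {}" using that disj by blast
  qed
  show ?case
  proof (cases "a < s \<and> b < s")
    case True
    then have "(r + a, c + b) \<notin> V" using Cons.prems(3) ab by auto
    then show ?thesis
      using True IH[of "insert (r + a, c + b) V"]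
      by (simp add: ab Let_def pos tpl board_nth[OF lt] print_stack_blank board_update[OF lt])
  next
    case False
    then have "template n s ! (a * n + b) = Blank" using tpl by simp
    then show ?thesis
      using False IH[OF subset_insertI] by (simp add: ab Let_def pos print_stack_blank)
  qed
qed simp

lemma translate_square:
  "(\<lambda>(a, b). (r + a, c + b)) ` ({0..<s} \<times> {0..<s}) = cells (r, c, s)"
proof
  show "cells (r, c, s) \<subseteq> (\<lambda>(a, b). (r + a, c + b)) ` ({0..<s} \<times> {0..<s})"
  proof
    fix x assume "x \<in> cells (r, c, s)"
    then show "x \<in> (\<lambda>(a, b). (r + a, c + b)) ` ({0..<s} \<times> {0..<s})"
      by (intro image_eqI[of _ _ "(fst x - r, snd x - c)"]) auto
  qed
qed auto

lemma print_seq_square: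
  assumes "w = 2 * n - 1" "1 \<le> s" "r + s \<le> n" "c + s \<le> n" "cells (r, c, s) \<inter> U = {}"
  shows "print_seq R n w (template n s) (r * w + c) (List.product [0..<n] [0..<n]) (board w U)
           = Some (board w (U \<union> cells (r, c, s)))"
proof -
  have "set (List.product [0..<n] [0..<n]) \<inter> {0..<s} \<times> {0..<s} = {0..<s} \<times> {0..<s}"
    using assms by auto
  then show ?thesis
    using print_seq_template[of w n r c "List.product [0..<n] [0..<n]" U s R] assms
    by (simp add: distinct_product translate_square Int_commute)
qed

lemma nth_templates: "1 \<le> s \<Longrightarrow> s \<le> n \<Longrightarrow> templates n ! (s - 1) = template n s"
  by (simp add: templates_def del: upt_Suc)

lemma template_cut_honest:
  assumes "1 \<le> s" "s \<le> n" "print_seq R n w (template n s) p L A = Some A'"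
  shows "chosen_cut r1 r2 (templates n) (s - 1)
           (\<lambda>T pt. case print_seq R n w (T ! pt) p L A of
                     None \<Rightarrow> None | Some A' \<Rightarrow> Some (T[pt := template n s], A'))
         = Some (templates n, A')"
  by (rule chosen_cut_put_back[where f = "\<lambda>t. print_seq R n w t p L A"])
    (use assms in \<open>simp_all add: nth_templates templates_def del: upt_Suc\<close>)

lemma meadows_step_honest:
  assumes "1 \<le> s" "r + s \<le> n" "c + s \<le> n" "cells (r, c, s) \<inter> U = {}"
    and "set dots \<subseteq> grid n"
    and "\<forall>j<length dots. dots ! j \<in> U \<union> cells (r, c, s) \<longleftrightarrow> j \<le> i"
  shows "meadows_step \<sigma> n dots i (r, c, s) (board (2 * n - 1) U, templates n)
           = Some (board (2 * n - 1) (U \<union> cells (r, c, s)), templates n)"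
proof -
  define w where "w = 2 * n - 1"
  define L where "L = List.product [0..<n] [0..<n]"
  define R where "R = (\<lambda>(a, b). (\<sigma> [i,2,a,b,0], \<sigma> [i,2,a,b,1]))"
  define V where "V = U \<union> cells (r, c, s)"
  have "chosen_cut (\<sigma> [i,0,0]) (\<sigma> [i,0,1]) (board w U) (r * w + c)
      (\<lambda>A p. case chosen_cut (\<sigma> [i,1,0]) (\<sigma> [i,1,1]) (templates n) (s - 1)
                (\<lambda>T pt. case print_seq R n w (T ! pt) p L A of
                          None \<Rightarrow> None | Some A' \<Rightarrow> Some (T[pt := template n s], A')) of
              None \<Rightarrow> None | Some (T', A') \<Rightarrow> Some (A', T'))
    = Some (board w V, templates n)"
  proof (rule chosen_cut_eq_Some)
    show "r * w + c < length (board w U)"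
      using mult_add_less_mult[of r w c w] assms(1-3) by (simp add: w_def)
    fix j assume j: "j < length (board w U)" "(\<sigma> [i,0,0] + j) mod length (board w U) = r * w + c"
    have "print_seq R n w (template n s) j L (rotate (\<sigma> [i,0,0]) (board w U))
        = map_option (rotate (\<sigma> [i,0,0])) (print_seq R n w (template n s) (r * w + c) L (board w U))"
      using print_seq_rotate[OF le_less_trans[OF le0 j(1)] j(2)] .
    also have "\<dots> = Some (rotate (\<sigma> [i,0,0]) (board w V))"
      using print_seq_square[OF w_def assms(1-4)] by (simp add: L_def V_def)
    finally show "(case chosen_cut (\<sigma> [i,1,0]) (\<sigma> [i,1,1]) (templates n) (s - 1)
                (\<lambda>T pt. case print_seq R n w (T ! pt) j L (rotate (\<sigma> [i,0,0]) (board w U)) of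
                          None \<Rightarrow> None | Some A' \<Rightarrow> Some (T[pt := template n s], A')) of
              None \<Rightarrow> None | Some (T', A') \<Rightarrow> Some (A', T'))
        = Some (rotate (\<sigma> [i,0,0]) (board w V), templates n)"
      using template_cut_honest[OF assms(1)] assms(2) by simp
  qed simp
  moreover have "\<forall>j<length dots. board w V ! (fst (dots ! j) * w + snd (dots ! j))
      = (if j \<le> i then Num 1 else Blank)"
  proof (intro allI impI)
    fix j assume j: "j < length dots"
    then have "dots ! j \<in> grid n" using assms(5) by auto
    then have "fst (dots ! j) < w" "snd (dots ! j) < w" by (auto simp: grid_def w_def)
    then show "board w V ! (fst (dots ! j) * w + snd (dots ! j)) = (if j \<le> i then Num 1 else Blank)"
      using assms(6) j by (simp add: board_nth V_def)
  qed
  ultimately show ?thesis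
    by (simp add: meadows_step_def w_def L_def R_def V_def product_concat_map)
qed

lemma meadows_steps_drop:
  assumes "\<And>k. i \<le> k \<Longrightarrow> k < length Bs
             \<Longrightarrow> meadows_step \<sigma> n dots k (Bs ! k) (st k) = Some (st (Suc k))"
    and "i \<le> length Bs"
  shows "meadows_steps \<sigma> n dots (drop i Bs) i (st i) = Some (st (length Bs))"
  using assms
proof (induction "length Bs - i" arbitrary: i)
  case (Suc m)
  then have "drop i Bs = Bs ! i # drop (Suc i) Bs" by (simp add: Cons_nth_drop_Suc)
  then show ?case using Suc by simp
qed simp

locale ordered_meadows_solution =
  fixes n :: nat and dots :: "(nat \<times> nat) list" and Bs :: "(nat \<times> nat \<times> nat) list"
  assumes puzzle: "meadows_puzzle n dots"
    and solution: "is_meadows_solution n dots (set Bs)"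
    and length_squares: "length Bs = length dots"
    and dot_in_square: "\<forall>i<length dots. dots ! i \<in> cells (Bs ! i)"
begin

lemma dot_in_square_iff:
  assumes "j < length dots" "k < length dots"
  shows "dots ! j \<in> cells (Bs ! k) \<longleftrightarrow> j = k"
proof
  assume j: "dots ! j \<in> cells (Bs ! k)"
  have "card (set dots \<inter> cells (Bs ! k)) = 1"
    using solution assms length_squares by (simp add: is_meadows_solution_def)
  moreover have "dots ! j \<in> set dots \<inter> cells (Bs ! k)" "dots ! k \<in> set dots \<inter> cells (Bs ! k)"
    using j dot_in_square assms by auto
  ultimately have "dots ! j = dots ! k" by (metis card_1_singletonE singletonD)
  then show "j = k" using puzzle assms by (simp add: meadows_puzzle_def nth_eq_iff_index_eq)
qed (use dot_in_square assms in simp)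

lemma squares_disjoint:
  assumes "j < length Bs" "k < length Bs" "j \<noteq> k"
  shows "cells (Bs ! j) \<inter> cells (Bs ! k) = {}"
proof -
  have "Bs ! j \<noteq> Bs ! k"
    using dot_in_square_iff[of j j] dot_in_square_iff[of j k] assms length_squares by auto
  then show ?thesis using solution assms by (simp add: is_meadows_solution_def)
qed

lemma square_bounds:
  assumes "k < length Bs" "Bs ! k = (r, c, s)"
  shows "1 \<le> s" "r + s \<le> n" "c + s \<le> n"
proof -
  have "\<forall>B\<in>set Bs. 1 \<le> snd (snd B) \<and> cells B \<subseteq> grid n"
    using solution by (simp add: is_meadows_solution_def)
  then have "1 \<le> snd (snd (Bs ! k)) \<and> cells (Bs ! k) \<subseteq> grid n"
    using assms(1) by simp
  then have s: "1 \<le> s" and sub: "cells (r, c, s) \<subseteq> grid n" using assms(2) by simp_all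
  from s have "(r + s - 1, c + s - 1) \<in> cells (r, c, s)" by auto
  with sub have "(r + s - 1, c + s - 1) \<in> grid n" by blast
  with s show "1 \<le> s" "r + s \<le> n" "c + s \<le> n" by (auto simp: grid_def)
qed

definition covered :: "nat \<Rightarrow> (nat \<times> nat) set" where
  "covered k = (\<Union>j<k. cells (Bs ! j))"

lemma covered_Suc: "covered (Suc k) = covered k \<union> cells (Bs ! k)"
  by (simp add: covered_def lessThan_Suc Un_commute)

lemma covered_length: "covered (length Bs) = grid n"
proof -
  have "cells ` set Bs = (\<lambda>j. cells (Bs ! j)) ` {..<length Bs}"
    by (auto simp: set_conv_nth)
  then show ?thesis using solution by (simp add: covered_def is_meadows_solution_def)
qed

lemma honest_step:
  assumes "k < length Bs"
  shows "meadows_step \<sigma> n dots k (Bs ! k) (board (2 * n - 1) (covered k), templates n)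
           = Some (board (2 * n - 1) (covered (Suc k)), templates n)"
proof -
  obtain r c s where rcs: "Bs ! k = (r, c, s)" by (cases "Bs ! k")
  have "cells (Bs ! k) \<inter> cells (Bs ! j) = {}" if "j < k" for j
    using squares_disjoint[of k j] assms that by simp
  then have "cells (Bs ! k) \<inter> covered k = {}" by (auto simp: covered_def)
  moreover have "\<forall>j<length dots. dots ! j \<in> covered (Suc k) \<longleftrightarrow> j \<le> k"
    using dot_in_square_iff assms length_squares by (auto simp: covered_def less_Suc_eq_le)
  moreover have "set dots \<subseteq> grid n" using puzzle by (simp add: meadows_puzzle_def)
  ultimately show ?thesis
    using meadows_step_honest[OF square_bounds[OF assms rcs]] rcs by (simp add: covered_Suc)
qed

lemma honest_run:
  "meadows_steps \<sigma> n dots Bs 0 (replicate ((2 * n - 1) * (2 * n - 1)) Blank, templates n)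
     = Some (board (2 * n - 1) (grid n), templates n)"
proof -
  have "replicate ((2 * n - 1) * (2 * n - 1)) Blank = board (2 * n - 1) (covered 0)"
    by (simp add: board_def covered_def map_replicate_const)
  then show ?thesis
    using meadows_steps_drop[of 0 Bs \<sigma> n dots "\<lambda>k. (board (2 * n - 1) (covered k), templates n)"]
      honest_step covered_length by simp
qed

end

theorem lemma4:
  fixes n :: nat and dots :: "(nat \<times> nat) list" and Bs :: "(nat \<times> nat \<times> nat) list"
  assumes "meadows_puzzle n dots"
    and "is_meadows_solution n dots (set Bs)"
    and "length Bs = length dots"
    and "\<forall>i<length dots. dots ! i \<in> cells (Bs ! i)"
  shows "\<forall>\<sigma>. meadows_accepts \<sigma> n dots Bs"
proof
  fix \<sigma>
  interpret ordered_meadows_solution n dots Bs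
    using assms by unfold_locales
  show "meadows_accepts \<sigma> n dots Bs"
    using honest_run[of \<sigma>]
    by (auto simp: meadows_accepts_def templates_def board_nth grid_def)
qed

end
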